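(* Let $G$ be a connected graph with a universal vertex $v$ (adjacent to all other vertices). Then $v$ is not a basis forced vertex of $G$.
   Context: All graphs are finite and simple. For vertices $u,w$ of a connected graph $G$, $d(u,w)$ is the length of a shortest $u$–$w$ path. A set $R\subseteq V(G)$ is a resolving set if for all distinct $x,y\in V(G)$ there is $r\in R$ with $d(r,x)\neq d(r,y)$. The metric dimension $\dim(G)$ is the minimum cardinality of a resolving set, and a resolving set of cardinality $\dim(G)$ is a metric basis. A vertex is a basis forced vertex if it belongs to every metric basis of $G$. *)

theory Defs
  imports Main
begin

definition simple_graph :: "'a set \<Rightarrow> ('a \<Rightarrow> 'a \<Rightarrow> bool) \<Rightarrow> bool" where
  "simple_graph V E \<longleftrightarrow> finite V
     \<and> (\<forall>u w. E u w \<longrightarrow> u \<in> V \<and> w \<in> V)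
     \<and> (\<forall>u w. E u w \<longrightarrow> E w u)
     \<and> (\<forall>u. \<not> E u u)"

definition walk :: "'a set \<Rightarrow> ('a \<Rightarrow> 'a \<Rightarrow> bool) \<Rightarrow> 'a list \<Rightarrow> bool" where
  "walk V E xs \<longleftrightarrow> xs \<noteq> [] \<and> set xs \<subseteq> V
     \<and> (\<forall>i. Suc i < length xs \<longrightarrow> E (xs ! i) (xs ! Suc i))"

definition connected_graph :: "'a set \<Rightarrow> ('a \<Rightarrow> 'a \<Rightarrow> bool) \<Rightarrow> bool" where
  "connected_graph V E \<longleftrightarrow> V \<noteq> {}
     \<and> (\<forall>u\<in>V. \<forall>w\<in>V. \<exists>xs. walk V E xs \<and> hd xs = u \<and> last xs = w)"

definition gdist :: "'a set \<Rightarrow> ('a \<Rightarrow> 'a \<Rightarrow> bool) \<Rightarrow> 'a \<Rightarrow> 'a \<Rightarrow> nat" where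
  "gdist V E u w = (LEAST n. \<exists>xs. walk V E xs \<and> hd xs = u \<and> last xs = w \<and> length xs = Suc n)"

definition resolving_set :: "'a set \<Rightarrow> ('a \<Rightarrow> 'a \<Rightarrow> bool) \<Rightarrow> 'a set \<Rightarrow> bool" where
  "resolving_set V E R \<longleftrightarrow> R \<subseteq> V
     \<and> (\<forall>x\<in>V. \<forall>y\<in>V. x \<noteq> y \<longrightarrow> (\<exists>r\<in>R. gdist V E r x \<noteq> gdist V E r y))"

definition metric_dim :: "'a set \<Rightarrow> ('a \<Rightarrow> 'a \<Rightarrow> bool) \<Rightarrow> nat" where
  "metric_dim V E = (LEAST k. \<exists>R. resolving_set V E R \<and> card R = k)"

definition metric_basis :: "'a set \<Rightarrow> ('a \<Rightarrow> 'a \<Rightarrow> bool) \<Rightarrow> 'a set \<Rightarrow> bool" where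
  "metric_basis V E R \<longleftrightarrow> resolving_set V E R \<and> card R = metric_dim V E"

definition basis_forced :: "'a set \<Rightarrow> ('a \<Rightarrow> 'a \<Rightarrow> bool) \<Rightarrow> 'a \<Rightarrow> bool" where
  "basis_forced V E v \<longleftrightarrow> (\<forall>R. metric_basis V E R \<longrightarrow> v \<in> R)"

end

theory Submission
  imports Defs
begin

text \<open>It suffices that the distance from v to every other vertex is the same. Take a metric
basis R containing v. By minimality R - {v} is not resolving, and since v does not separate two
vertices different from v, the pair that R - {v} fails to separate is v together with some x.
Swapping v for x gives a resolving set of the same size: x separates itself from v, and any other
vertex y is separated from x by R - {v} (v cannot do it), hence also from v, whose distances to
R - {v} coincide with those of x. This is a metric basis avoiding v.\<close>

lemma gdist_self:
  assumes "x \<in> V"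
  shows "gdist V E x x = 0"
proof -
  have "walk V E [x]" using assms by (simp add: walk_def)
  then have "\<exists>xs. walk V E xs \<and> hd xs = x \<and> last xs = x \<and> length xs = Suc 0"
    by (intro exI[of _ "[x]"]) simp
  then show ?thesis unfolding gdist_def by (simp add: Least_eq_0)
qed

lemma gdist_pos:
  assumes "walk V E xs" "hd xs = x" "last xs = y" "x \<noteq> y"
  shows "0 < gdist V E x y"
proof (rule ccontr)
  assume "\<not> 0 < gdist V E x y"
  moreover have "\<exists>n xs. walk V E xs \<and> hd xs = x \<and> last xs = y \<and> length xs = Suc n"
    using assms by (metis walk_def length_greater_0_conv Suc_pred)
  ultimately obtain ys where "walk V E ys" "hd ys = x" "last ys = y" "length ys = Suc 0"
    unfolding gdist_def
    using LeastI_ex[where P = "\<lambda>n. \<exists>xs. walk V E xs \<and> hd xs = x \<and> last xs = y \<and> length xs = Suc n"]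
    by (metis (no_types, lifting) gr0I)
  then show False using assms(4)
    by (metis One_nat_def hd_conv_nth last_conv_nth length_0_conv diff_Suc_1 nat.distinct(1))
qed

lemma connected_gdist_pos:
  assumes "connected_graph V E" "x \<in> V" "y \<in> V" "x \<noteq> y"
  shows "0 < gdist V E x y"
  using assms gdist_pos unfolding connected_graph_def by metis

lemma connected_gdist_self_ne:
  assumes "connected_graph V E" "x \<in> V" "y \<in> V" "x \<noteq> y"
  shows "gdist V E x x \<noteq> gdist V E x y"
  using gdist_self[OF assms(2)] connected_gdist_pos[OF assms] by simp

lemma gdist_edge:
  assumes "x \<in> V" "y \<in> V" "x \<noteq> y" "E x y"
  shows "gdist V E x y = 1"
proof -
  have walk: "walk V E [x, y]" using assms by (auto simp: walk_def less_Suc_eq)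
  have "gdist V E x y \<le> 1" unfolding gdist_def
    by (rule Least_le) (rule exI[of _ "[x, y]"], use walk in simp)
  with gdist_pos[OF walk _ _ assms(3)] show ?thesis by simp
qed

lemma resolving_setD:
  assumes "resolving_set V E R" "x \<in> V" "y \<in> V" "x \<noteq> y"
  obtains r where "r \<in> R" "gdist V E r x \<noteq> gdist V E r y"
  using assms unfolding resolving_set_def by blast

lemma resolving_set_subset: "resolving_set V E R \<Longrightarrow> R \<subseteq> V"
  unfolding resolving_set_def by blast

lemma resolving_set_vertices:
  assumes "connected_graph V E"
  shows "resolving_set V E V"
  unfolding resolving_set_def
proof (intro conjI ballI impI)
  fix x y assume "x \<in> V" "y \<in> V" "x \<noteq> y"
  then have "gdist V E x x \<noteq> gdist V E x y" by (rule connected_gdist_self_ne[OF assms])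
  with \<open>x \<in> V\<close> show "\<exists>r\<in>V. gdist V E r x \<noteq> gdist V E r y" by blast
qed simp

lemma metric_dim_le_card:
  assumes "resolving_set V E R"
  shows "metric_dim V E \<le> card R"
  unfolding metric_dim_def by (rule Least_le) (use assms in blast)

lemma metric_basis_exists:
  assumes "resolving_set V E R"
  shows "\<exists>B. metric_basis V E B"
  unfolding metric_basis_def metric_dim_def
  by (rule LeastI_ex[where P = "\<lambda>k. \<exists>B. resolving_set V E B \<and> card B = k"]) (use assms in blast)

lemma metric_basis_remove_not_resolving:
  assumes "metric_basis V E R" "finite R" "v \<in> R"
  shows "\<not> resolving_set V E (R - {v})"
proof
  assume "resolving_set V E (R - {v})"
  then have "metric_dim V E \<le> card R - 1" using metric_dim_le_card assms(2,3) by fastforce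
  moreover have "card R > 0" using assms(2,3) card_gt_0_iff by blast
  ultimately show False using assms(1) by (simp add: metric_basis_def)
qed

definition equidistant_vertex :: "'a set \<Rightarrow> ('a \<Rightarrow> 'a \<Rightarrow> bool) \<Rightarrow> 'a \<Rightarrow> bool" where
  "equidistant_vertex V E v \<longleftrightarrow>
     (\<forall>y\<in>V - {v}. \<forall>z\<in>V - {v}. gdist V E v y = gdist V E v z)"

lemma equidistant_vertex_twin:
  assumes "resolving_set V E R" "v \<in> R" "\<not> resolving_set V E (R - {v})"
    and "equidistant_vertex V E v"
  obtains x where "x \<in> V" "x \<noteq> v" "\<forall>r\<in>R - {v}. gdist V E r x = gdist V E r v"
proof -
  obtain a b where ab: "a \<in> V" "b \<in> V" "a \<noteq> b" "\<forall>r\<in>R - {v}. gdist V E r a = gdist V E r b"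
    using assms(1,3) unfolding resolving_set_def by blast
  obtain r where "r \<in> R" "gdist V E r a \<noteq> gdist V E r b"
    using resolving_setD[OF assms(1) ab(1-3)] .
  with ab(4) have "gdist V E v a \<noteq> gdist V E v b" by blast
  then have "a = v \<or> b = v" using assms(4) ab unfolding equidistant_vertex_def by blast
  then show thesis using that ab by metis
qed

lemma resolving_set_exchange:
  assumes "connected_graph V E" "resolving_set V E R" "v \<in> R" "equidistant_vertex V E v"
    and x: "x \<in> V" "x \<noteq> v" "\<forall>r\<in>R - {v}. gdist V E r x = gdist V E r v"
  shows "resolving_set V E (insert x (R - {v}))"
proof -
  have "v \<in> V" using resolving_set_subset assms(2,3) by blast
  have separates_from_v: "\<exists>r\<in>insert x (R - {v}). gdist V E r y \<noteq> gdist V E r v"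
    if y: "y \<in> V" "y \<noteq> v" for y
  proof (cases "y = x")
    case True
    with connected_gdist_self_ne[OF assms(1) x(1) \<open>v \<in> V\<close> x(2)] show ?thesis by blast
  next
    case False
    obtain r where r: "r \<in> R" "gdist V E r y \<noteq> gdist V E r x"
      using resolving_setD[OF assms(2) y(1) x(1) False] .
    have "gdist V E v y = gdist V E v x"
      using assms(4) x(1,2) y unfolding equidistant_vertex_def by blast
    with r have "r \<in> R - {v}" by blast
    with r(2) x(3) have "gdist V E r y \<noteq> gdist V E r v" by simp
    with \<open>r \<in> R - {v}\<close> show ?thesis by blast
  qed
  show ?thesis
    unfolding resolving_set_def
  proof (intro conjI ballI impI)
    show "insert x (R - {v}) \<subseteq> V" using resolving_set_subset[OF assms(2)] x(1) by blast
    fix a b assume ab: "a \<in> V" "b \<in> V" "a \<noteq> b"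
    obtain r where r: "r \<in> R" "gdist V E r a \<noteq> gdist V E r b"
      using resolving_setD[OF assms(2) ab] .
    show "\<exists>r\<in>insert x (R - {v}). gdist V E r a \<noteq> gdist V E r b"
    proof (cases "r = v")
      case True
      then have "a = v \<or> b = v" using r assms(4) ab unfolding equidistant_vertex_def by blast
      then show ?thesis
      proof
        assume "a = v"
        then show ?thesis using separates_from_v[of b] ab by (metis (mono_tags))
      next
        assume "b = v"
        then show ?thesis using separates_from_v[of a] ab by (metis (mono_tags))
      qed
    next
      case False
      with r show ?thesis by blast
    qed
  qed
qed

theorem equidistant_vertex_not_basis_forced:
  assumes "finite V" "connected_graph V E" "equidistant_vertex V E v"
  shows "\<not> basis_forced V E v"
proof
  assume forced: "basis_forced V E v"
  obtain R where R: "metric_basis V E R"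
    using metric_basis_exists[OF resolving_set_vertices[OF assms(2)]] by blast
  have "v \<in> R" using forced R by (simp add: basis_forced_def)
  have resolving: "resolving_set V E R" using R by (simp add: metric_basis_def)
  have "finite R" using finite_subset[OF resolving_set_subset[OF resolving] assms(1)] .
  obtain x where x: "x \<in> V" "x \<noteq> v" "\<forall>r\<in>R - {v}. gdist V E r x = gdist V E r v"
    using equidistant_vertex_twin[OF resolving \<open>v \<in> R\<close>
        metric_basis_remove_not_resolving[OF R \<open>finite R\<close> \<open>v \<in> R\<close>] assms(3)] .
  have "v \<in> V" using resolving_set_subset[OF resolving] \<open>v \<in> R\<close> by blast
  with x(3) connected_gdist_self_ne[OF assms(2) x(1) _ x(2)] have "x \<notin> R - {v}" by blast
  moreover have "card R > 0" using \<open>finite R\<close> \<open>v \<in> R\<close> card_gt_0_iff by blast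
  ultimately have "card (insert x (R - {v})) = card R"
    using \<open>finite R\<close> \<open>v \<in> R\<close> by simp
  with R resolving_set_exchange[OF assms(2) resolving \<open>v \<in> R\<close> assms(3) x]
  have "metric_basis V E (insert x (R - {v}))" by (simp add: metric_basis_def)
  with forced x(2) show False unfolding basis_forced_def by blast
qed

theorem lemma4:
  fixes V :: "'a set" and E :: "'a \<Rightarrow> 'a \<Rightarrow> bool" and v :: 'a
  assumes "simple_graph V E"
    and "connected_graph V E"
    and "v \<in> V"
    and "\<forall>u\<in>V. u \<noteq> v \<longrightarrow> E v u"
  shows "\<not> basis_forced V E v"
proof -
  have "gdist V E v u = 1" if u: "u \<in> V - {v}" for u
    using gdist_edge[OF assms(3), of u] u assms(4) by blast
  then have "equidistant_vertex V E v" unfolding equidistant_vertex_def by simp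
  moreover have "finite V" using assms(1) by (simp add: simple_graph_def)
  ultimately show ?thesis using equidistant_vertex_not_basis_forced[OF _ assms(2)] by blast
qed

end
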